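(* Let $K\ge 1$ and $1\le K^{*}\le K$ be integers. Let $\alpha_1,\dots,\alpha_K$ be independent random variables with $\alpha_k\sim\mathrm{Bernoulli}(p_k)$, $p_k\in(0,1)$ for $k=1,\dots,K$, and write $\boldsymbol{\alpha}=(\alpha_1,\dots,\alpha_K)$. Let $R\in\{0,1\}$ be a response generated from the DINA model for an item whose required attributes are exactly the first $K^{*}$ attributes (i.e. its $Q$-matrix row is $\mathbf{q}=(1,\dots,1,0,\dots,0)$ with $K^{*}$ ones): that is, with ideal response $\xi=\prod_{k=1}^{K^{*}}\alpha_k$, $$P(R=1\mid\boldsymbol{\alpha})=\begin{cases}1-s,&\xi=1,\\ g,&\xi=0,\end{cases}$$ where the slipping parameter $s$ and guessing parameter $g$ satisfy $1-s>g$. Then the mis-specified linear additive model of $R$ regressed on $(\alpha_1,\dots,\alpha_K)$ has mean function $\mathbb{E}^{*}[R\mid\boldsymbol{\alpha}]=\beta_0+\beta_1\alpha_1+\dots+\beta_K\alpha_K$ with $\beta_l\neq 0$ for $l=1,\dots,K^{*}$ and $\beta_k=0$ for $k=K^{*}+1,\dots,K$.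
   Context: The mis-specified linear additive model's mean function $\mathbb{E}^{*}[R\mid\boldsymbol{\alpha}]$ denotes the population linear regression (least squares) mean function of $R$ on $\alpha_1,\dots,\alpha_K$ with an intercept, i.e. $\beta_0+\sum_{k=1}^K\beta_k\alpha_k$ where $(\beta_0,\dots,\beta_K)$ minimize $\mathbb{E}\big[(R-\beta_0-\sum_{k=1}^K\beta_k\alpha_k)^2\big]$ under the joint distribution of $(\boldsymbol{\alpha},R)$ described. *)

theory Defs
  imports Complex_Main "HOL-Library.FuncSet"
begin

definition attr_space :: "nat \<Rightarrow> (nat \<Rightarrow> real) set" where
  "attr_space K = ({1..K} \<rightarrow>\<^sub>E {0, 1})"

definition attr_prob :: "(nat \<Rightarrow> real) \<Rightarrow> nat \<Rightarrow> (nat \<Rightarrow> real) \<Rightarrow> real" where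
  "attr_prob p K a = (\<Prod>k\<in>{1..K}. if a k = 1 then p k else 1 - p k)"

text \<open>DINA model: P(R = 1 | alpha) for the item with q = (1,...,1,0,...,0), Ks ones.\<close>
definition dina_mean :: "nat \<Rightarrow> real \<Rightarrow> real \<Rightarrow> (nat \<Rightarrow> real) \<Rightarrow> real" where
  "dina_mean Ks s g a = (if (\<Prod>k\<in>{1..Ks}. a k) = 1 then 1 - s else g)"

definition lin_pred :: "nat \<Rightarrow> (nat \<Rightarrow> real) \<Rightarrow> (nat \<Rightarrow> real) \<Rightarrow> real" where
  "lin_pred K \<beta> a = \<beta> 0 + (\<Sum>k=1..K. \<beta> k * a k)"

text \<open>Population squared loss E[(R - beta_0 - sum_k beta_k alpha_k)^2] under the joint
  law of (alpha, R), where R | alpha ~ Bernoulli(dina_mean).\<close>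
definition ls_risk :: "nat \<Rightarrow> nat \<Rightarrow> (nat \<Rightarrow> real) \<Rightarrow> real \<Rightarrow> real \<Rightarrow> (nat \<Rightarrow> real) \<Rightarrow> real" where
  "ls_risk K Ks p s g \<beta> =
     (\<Sum>a\<in>attr_space K. attr_prob p K a *
        (dina_mean Ks s g a * (1 - lin_pred K \<beta> a)^2
         + (1 - dina_mean Ks s g a) * (0 - lin_pred K \<beta> a)^2))"

definition is_pop_ls :: "nat \<Rightarrow> nat \<Rightarrow> (nat \<Rightarrow> real) \<Rightarrow> real \<Rightarrow> real \<Rightarrow> (nat \<Rightarrow> real) \<Rightarrow> bool" where
  "is_pop_ls K Ks p s g \<beta> = (\<forall>\<gamma>. ls_risk K Ks p s g \<beta> \<le> ls_risk K Ks p s g \<gamma>)"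

end

theory Submission
  imports Defs
begin

text \<open>
  The DINA mean of \<open>R\<close> is \<open>g + (1 - s - g) \<xi>\<close> with \<open>\<xi> = \<Prod>k\<le>K\<^sup>*. \<alpha>\<^sub>k\<close>, so it suffices
  to regress \<open>\<xi>\<close> on \<open>\<alpha>\<close>. With \<open>P = \<Prod>k\<le>K\<^sup>*. p\<^sub>k\<close>, independence gives
  \<open>E[\<alpha>\<^sub>j \<xi>] = P\<close> for \<open>j \<le> K\<^sup>*\<close> and \<open>p\<^sub>j P\<close> otherwise, and from this one checks that
  \<open>\<xi> - P - \<Sum>k\<le>K\<^sup>*. (P / p\<^sub>k) (\<alpha>\<^sub>k - p\<^sub>k)\<close> is orthogonal to \<open>1\<close> and to every \<open>\<alpha>\<^sub>j\<close>.
  These normal equations identify a minimiser of the squared risk, with slopes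
  \<open>(1 - s - g) P / p\<^sub>k \<noteq> 0\<close> on the required attributes and \<open>0\<close> on the others. The
  minimiser is unique because every profile in \<open>{0,1}\<^sup>K\<close> has positive probability, so two
  minimisers have the same fitted values on all profiles and hence the same coefficients.
\<close>

definition attr_expect :: "nat \<Rightarrow> (nat \<Rightarrow> real) \<Rightarrow> ((nat \<Rightarrow> real) \<Rightarrow> real) \<Rightarrow> real" where
  "attr_expect K p f = (\<Sum>a\<in>attr_space K. attr_prob p K a * f a)"

lemma finite_attr_space: "finite (attr_space K)"
  unfolding attr_space_def by (intro finite_PiE) auto

lemma attr_space_values: "a \<in> attr_space K \<Longrightarrow> i \<in> {1..K} \<Longrightarrow> a i = 0 \<or> a i = 1"
  unfolding attr_space_def by (auto simp: PiE_iff)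

lemma attr_prob_pos: "\<forall>k\<in>{1..K}. 0 < p k \<and> p k < 1 \<Longrightarrow> attr_prob p K a > 0"
  unfolding attr_prob_def by (intro prod_pos) auto

lemma attr_expect_add: "attr_expect K p (\<lambda>a. u a + v a) = attr_expect K p u + attr_expect K p v"
  unfolding attr_expect_def by (simp add: distrib_left sum.distrib)

lemma attr_expect_diff: "attr_expect K p (\<lambda>a. u a - v a) = attr_expect K p u - attr_expect K p v"
  unfolding attr_expect_def by (simp add: right_diff_distrib sum_subtractf)

lemma attr_expect_cmult: "attr_expect K p (\<lambda>a. c * u a) = c * attr_expect K p u"
  unfolding attr_expect_def by (simp add: sum_distrib_left mult_ac)

lemma attr_expect_sum:
  "attr_expect K p (\<lambda>a. \<Sum>k\<in>I. u k a) = (\<Sum>k\<in>I. attr_expect K p (u k))"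
  unfolding attr_expect_def by (simp add: sum_distrib_left sum.swap[of _ I])

lemma attr_expect_cong:
  "(\<And>a. a \<in> attr_space K \<Longrightarrow> u a = v a) \<Longrightarrow> attr_expect K p u = attr_expect K p v"
  unfolding attr_expect_def by (intro sum.cong) auto

lemma attr_expect_nonneg:
  "\<forall>k\<in>{1..K}. 0 < p k \<and> p k < 1 \<Longrightarrow> (\<And>a. a \<in> attr_space K \<Longrightarrow> 0 \<le> f a)
    \<Longrightarrow> 0 \<le> attr_expect K p f"
  unfolding attr_expect_def using attr_prob_pos by (intro sum_nonneg) (simp add: less_imp_le)

lemma attr_expect_nonneg_eq_0:
  assumes p: "\<forall>k\<in>{1..K}. 0 < p k \<and> p k < 1"
    and f: "\<And>a. a \<in> attr_space K \<Longrightarrow> 0 \<le> f a" and "attr_expect K p f \<le> 0"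
    and a: "a \<in> attr_space K"
  shows "f a = 0"
proof -
  have terms_nonneg: "\<forall>a\<in>attr_space K. 0 \<le> attr_prob p K a * f a"
    using attr_prob_pos[OF p] f by (simp add: less_imp_le)
  have "attr_expect K p f = 0"
    using attr_expect_nonneg[of K p f, OF p f] \<open>attr_expect K p f \<le> 0\<close> by simp
  then have "\<forall>a\<in>attr_space K. attr_prob p K a * f a = 0"
    unfolding attr_expect_def
    by (subst (asm) sum_nonneg_eq_0_iff[OF finite_attr_space]) (use terms_nonneg in auto)
  then have "attr_prob p K a * f a = 0" using a by blast
  then show ?thesis using attr_prob_pos[OF p, of a] by simp
qed

lemma attr_expect_prod:
  "attr_expect K p (\<lambda>a. \<Prod>i\<in>{1..K}. c i (a i)) = (\<Prod>i\<in>{1..K}. (1 - p i) * c i 0 + p i * c i 1)"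
proof -
  have "attr_expect K p (\<lambda>a. \<Prod>i\<in>{1..K}. c i (a i))
      = (\<Sum>a\<in>attr_space K. \<Prod>i\<in>{1..K}. (if a i = 1 then p i else 1 - p i) * c i (a i))"
    unfolding attr_expect_def attr_prob_def by (simp add: prod.distrib)
  also have "\<dots> = (\<Prod>i\<in>{1..K}. \<Sum>y\<in>{0,1}. (if y = 1 then p i else 1 - p i) * c i y)"
    unfolding attr_space_def by (subst prod_sum_PiE) auto
  finally show ?thesis by simp
qed

lemma attr_expect_const: "attr_expect K p (\<lambda>a. c) = c"
  using attr_expect_prod[of K p "\<lambda>i x. 1"] attr_expect_cmult[of K p c "\<lambda>a. 1"] by simp

lemma prod_if_mem_subset:
  fixes K :: nat
  assumes "A \<subseteq> {1..K}"
  shows "(\<Prod>i\<in>{1..K}. if i \<in> A then f i else 1) = (\<Prod>i\<in>A. f i)"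
proof -
  have "{i \<in> {1..K}. i \<in> A} = A" using assms by auto
  then show ?thesis
    using prod.inter_filter[OF finite_atLeastAtMost[of 1 K], of f "\<lambda>i. i \<in> A"] by simp
qed

lemma attr_expect_prod_subset:
  assumes "A \<subseteq> {1..K}"
  shows "attr_expect K p (\<lambda>a. \<Prod>i\<in>A. a i) = (\<Prod>i\<in>A. p i)"
proof -
  have "attr_expect K p (\<lambda>a. \<Prod>i\<in>A. a i)
      = attr_expect K p (\<lambda>a. \<Prod>i\<in>{1..K}. (\<lambda>i x. if i \<in> A then x else 1) i (a i))"
    by (simp only: prod_if_mem_subset[OF assms])
  also have "\<dots> = (\<Prod>i\<in>{1..K}. if i \<in> A then p i else 1)"
    by (rule trans[OF attr_expect_prod]) (intro prod.cong, auto)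
  finally show ?thesis using prod_if_mem_subset[OF assms] by simp
qed

lemma attr_mult_prod_insert:
  assumes a: "a \<in> attr_space K" and j: "j \<in> {1..K}" and "finite A"
  shows "a j * (\<Prod>i\<in>A. a i) = (\<Prod>i\<in>insert j A. a i)"
proof (cases "j \<in> A")
  case True
  have "a j * a j = a j" using attr_space_values[OF a j] by auto
  then show ?thesis
    using True \<open>finite A\<close> by (simp add: prod.remove insert_absorb mult.assoc[symmetric])
qed (use \<open>finite A\<close> in simp)

lemma attr_expect_mult_prod_subset:
  assumes A: "A \<subseteq> {1..K}" and j: "j \<in> {1..K}"
  shows "attr_expect K p (\<lambda>a. a j * (\<Prod>i\<in>A. a i)) = (if j \<in> A then 1 else p j) * (\<Prod>i\<in>A. p i)"
proof -
  have "finite A" using A finite_subset by blast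
  have "attr_expect K p (\<lambda>a. a j * (\<Prod>i\<in>A. a i)) = attr_expect K p (\<lambda>a. \<Prod>i\<in>insert j A. a i)"
    using attr_mult_prod_insert[OF _ j \<open>finite A\<close>] by (rule attr_expect_cong)
  also have "\<dots> = (\<Prod>i\<in>insert j A. p i)"
    using A j by (intro attr_expect_prod_subset) auto
  finally show ?thesis using \<open>finite A\<close> by (simp add: insert_absorb)
qed

lemma attr_expect_component: "j \<in> {1..K} \<Longrightarrow> attr_expect K p (\<lambda>a. a j) = p j"
  using attr_expect_prod_subset[of "{j}" K p] by simp

lemma attr_expect_covariance:
  assumes j: "j \<in> {1..K}" and k: "k \<in> {1..K}"
  shows "attr_expect K p (\<lambda>a. a j * (a k - p k)) = (if j = k then p j * (1 - p j) else 0)"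
proof -
  have "attr_expect K p (\<lambda>a. a j * (a k - p k))
      = attr_expect K p (\<lambda>a. a j * (\<Prod>i\<in>{k}. a i)) - p k * attr_expect K p (\<lambda>a. a j)"
    by (simp only: flip: attr_expect_cmult attr_expect_diff) (simp add: algebra_simps)
  also have "\<dots> = (if j \<in> {k} then 1 else p j) * (\<Prod>i\<in>{k}. p i) - p k * p j"
    using attr_expect_mult_prod_subset[of "{k}" K j p, OF _ j] attr_expect_component[OF j] k by simp
  finally show ?thesis by (auto simp: algebra_simps)
qed

definition attr_orthogonal :: "nat \<Rightarrow> (nat \<Rightarrow> real) \<Rightarrow> ((nat \<Rightarrow> real) \<Rightarrow> real) \<Rightarrow> bool" where
  "attr_orthogonal K p r \<longleftrightarrow>
     attr_expect K p r = 0 \<and> (\<forall>j\<in>{1..K}. attr_expect K p (\<lambda>a. a j * r a) = 0)"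

lemma attr_orthogonal_cong:
  "(\<And>a. a \<in> attr_space K \<Longrightarrow> r a = r' a) \<Longrightarrow> attr_orthogonal K p r \<longleftrightarrow> attr_orthogonal K p r'"
  unfolding attr_orthogonal_def by (simp cong: attr_expect_cong)

lemma attr_orthogonal_cmult: "attr_orthogonal K p r \<Longrightarrow> attr_orthogonal K p (\<lambda>a. c * r a)"
  unfolding attr_orthogonal_def
  by (simp add: attr_expect_cmult mult.left_commute[where a = c])

lemma attr_expect_lin_pred_mult_orthogonal:
  assumes "attr_orthogonal K p r"
  shows "attr_expect K p (\<lambda>a. lin_pred K \<delta> a * r a) = 0"
proof -
  have "attr_expect K p (\<lambda>a. lin_pred K \<delta> a * r a)
      = \<delta> 0 * attr_expect K p r + (\<Sum>k=1..K. \<delta> k * attr_expect K p (\<lambda>a. a k * r a))"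
    unfolding lin_pred_def
    by (simp add: distrib_right sum_distrib_right mult.assoc attr_expect_add attr_expect_sum
        attr_expect_cmult)
  then show ?thesis using assms unfolding attr_orthogonal_def by simp
qed

lemma lin_pred_diff: "lin_pred K \<gamma> a - lin_pred K \<beta> a = lin_pred K (\<lambda>k. \<gamma> k - \<beta> k) a"
  unfolding lin_pred_def by (simp add: sum_subtractf left_diff_distrib)

lemma ls_risk_eq_noise_plus_bias:
  "ls_risk K Ks p s g \<beta> = attr_expect K p (\<lambda>a. dina_mean Ks s g a * (1 - dina_mean Ks s g a))
     + attr_expect K p (\<lambda>a. (lin_pred K \<beta> a - dina_mean Ks s g a)\<^sup>2)"
  unfolding ls_risk_def attr_expect_add[symmetric] unfolding attr_expect_def
  by (intro sum.cong) (auto simp: algebra_simps power2_eq_square)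

lemma ls_risk_pythagoras:
  assumes "attr_orthogonal K p (\<lambda>a. lin_pred K \<beta> a - dina_mean Ks s g a)"
  shows "ls_risk K Ks p s g \<gamma> = ls_risk K Ks p s g \<beta> + attr_expect K p (\<lambda>a. (lin_pred K \<gamma> a - lin_pred K \<beta> a)\<^sup>2)"
proof -
  define r where "r a = lin_pred K \<beta> a - dina_mean Ks s g a" for a
  define \<delta> where "\<delta> k = \<gamma> k - \<beta> k" for k
  have "attr_expect K p (\<lambda>a. (lin_pred K \<gamma> a - dina_mean Ks s g a)\<^sup>2)
      = attr_expect K p (\<lambda>a. (lin_pred K \<delta> a)\<^sup>2 + 2 * (lin_pred K \<delta> a * r a) + (r a)\<^sup>2)"
    unfolding \<delta>_def lin_pred_diff[symmetric] r_def by (simp add: algebra_simps power2_eq_square)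
  also have "\<dots> = attr_expect K p (\<lambda>a. (lin_pred K \<delta> a)\<^sup>2) + attr_expect K p (\<lambda>a. (r a)\<^sup>2)"
    using attr_expect_lin_pred_mult_orthogonal[OF assms[folded r_def]]
    by (simp add: attr_expect_add attr_expect_cmult)
  finally show ?thesis
    unfolding ls_risk_eq_noise_plus_bias r_def \<delta>_def lin_pred_diff by simp
qed

lemma is_pop_ls_if_orthogonal:
  assumes "\<forall>k\<in>{1..K}. 0 < p k \<and> p k < 1"
    and "attr_orthogonal K p (\<lambda>a. lin_pred K \<beta> a - dina_mean Ks s g a)"
  shows "is_pop_ls K Ks p s g \<beta>"
proof -
  have "ls_risk K Ks p s g \<beta> \<le> ls_risk K Ks p s g \<gamma>" for \<gamma>
  proof -
    have "0 \<le> attr_expect K p (\<lambda>a. (lin_pred K \<gamma> a - lin_pred K \<beta> a)\<^sup>2)"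
      by (rule attr_expect_nonneg[OF assms(1)]) simp
    then show ?thesis using ls_risk_pythagoras[OF assms(2), of \<gamma>] by linarith
  qed
  then show ?thesis unfolding is_pop_ls_def by blast
qed

lemma lin_pred_indicator:
  assumes "S \<subseteq> {1..K}"
  shows "lin_pred K \<beta> (restrict (\<lambda>i. if i \<in> S then 1 else 0) {1..K}) = \<beta> 0 + sum \<beta> S"
proof -
  have "(\<Sum>k=1..K. \<beta> k * restrict (\<lambda>i. if i \<in> S then 1 else 0) {1..K} k)
      = (\<Sum>k=1..K. if k \<in> S then \<beta> k else 0)"
    by (intro sum.cong) auto
  also have "\<dots> = sum \<beta> S"
    using assms by (simp add: sum.If_cases Int_absorb1)
  finally show ?thesis unfolding lin_pred_def by simp
qed

lemma lin_pred_coeffs_unique: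
  assumes "\<And>a. a \<in> attr_space K \<Longrightarrow> lin_pred K \<gamma> a = lin_pred K \<beta> a" and "k \<le> K"
  shows "\<gamma> k = \<beta> k"
proof -
  have indicator_in: "restrict (\<lambda>i. if i \<in> S then 1 else 0) {1..K} \<in> attr_space K" for S :: "nat set"
    unfolding attr_space_def by auto
  have "\<gamma> 0 + sum \<gamma> S = \<beta> 0 + sum \<beta> S" if "S \<subseteq> {1..K}" for S
    using assms(1)[OF indicator_in] lin_pred_indicator[OF that] by metis
  from this[of "{}"] this[of "{k}"] show ?thesis
    using \<open>k \<le> K\<close> by (cases "k = 0") auto
qed

lemma is_pop_ls_unique:
  assumes p: "\<forall>k\<in>{1..K}. 0 < p k \<and> p k < 1"
    and orth: "attr_orthogonal K p (\<lambda>a. lin_pred K \<beta> a - dina_mean Ks s g a)"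
    and \<gamma>: "is_pop_ls K Ks p s g \<gamma>" and "k \<le> K"
  shows "\<gamma> k = \<beta> k"
proof (rule lin_pred_coeffs_unique[OF _ \<open>k \<le> K\<close>])
  have "ls_risk K Ks p s g \<gamma> \<le> ls_risk K Ks p s g \<beta>"
    using \<gamma> unfolding is_pop_ls_def by blast
  then have gap: "attr_expect K p (\<lambda>a. (lin_pred K \<gamma> a - lin_pred K \<beta> a)\<^sup>2) \<le> 0"
    unfolding ls_risk_pythagoras[OF orth, of \<gamma>] by simp
  have "(lin_pred K \<gamma> a - lin_pred K \<beta> a)\<^sup>2 = 0" if "a \<in> attr_space K" for a
    by (rule attr_expect_nonneg_eq_0[OF p _ gap that]) simp
  then show "lin_pred K \<gamma> a = lin_pred K \<beta> a" if "a \<in> attr_space K" for a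
    using that by fastforce
qed

definition prod_ls_coeff :: "nat set \<Rightarrow> (nat \<Rightarrow> real) \<Rightarrow> nat \<Rightarrow> real" where
  "prod_ls_coeff A p k =
     (if k = 0 then (\<Prod>i\<in>A. p i) * (1 - real (card A))
      else if k \<in> A then (\<Prod>i\<in>A. p i) / p k else 0)"

lemma lin_pred_prod_ls_coeff:
  fixes K :: nat
  assumes A: "A \<subseteq> {1..K}" and p: "\<forall>k\<in>A. p k \<noteq> 0"
  shows "lin_pred K (prod_ls_coeff A p) a
    = (\<Prod>i\<in>A. p i) + (\<Sum>k\<in>A. (\<Prod>i\<in>A. p i) / p k * (a k - p k))"
proof -
  define P where "P = (\<Prod>i\<in>A. p i)"
  have "0 \<notin> A" using A by auto
  have "(\<Sum>k=1..K. prod_ls_coeff A p k * a k) = (\<Sum>k=1..K. if k \<in> A then P / p k * a k else 0)"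
    unfolding prod_ls_coeff_def P_def by (intro sum.cong) auto
  also have "\<dots> = (\<Sum>k\<in>A. P / p k * a k)"
    using A by (simp add: sum.If_cases Int_absorb1)
  also have "\<dots> = (\<Sum>k\<in>A. P / p k * (a k - p k)) + real (card A) * P"
    using p by (simp add: right_diff_distrib sum_subtractf)
  finally show ?thesis
    unfolding lin_pred_def using \<open>0 \<notin> A\<close> by (simp add: prod_ls_coeff_def P_def algebra_simps)
qed

lemma sum_attr_expect_covariance:
  assumes A: "A \<subseteq> {1..K}" and pA: "\<forall>k\<in>A. p k \<noteq> 0" and j: "j \<in> {1..K}"
  shows "(\<Sum>k\<in>A. c / p k * attr_expect K p (\<lambda>a. a j * (a k - p k)))
    = (if j \<in> A then c * (1 - p j) else 0)"
proof -
  have "finite A" using A finite_subset by auto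
  have "(\<Sum>k\<in>A. c / p k * attr_expect K p (\<lambda>a. a j * (a k - p k)))
      = (\<Sum>k\<in>A. if k = j then c * (1 - p j) else 0)"
    using A j pA by (intro sum.cong refl) (auto simp: attr_expect_covariance)
  then show ?thesis using \<open>finite A\<close> by simp
qed

lemma prod_ls_residual_orthogonal:
  fixes K :: nat
  assumes A: "A \<subseteq> {1..K}" and p: "\<forall>k\<in>{1..K}. 0 < p k \<and> p k < 1"
  shows "attr_orthogonal K p (\<lambda>a. lin_pred K (prod_ls_coeff A p) a - (\<Prod>i\<in>A. a i))"
proof -
  define P where "P = (\<Prod>i\<in>A. p i)"
  have pA: "\<forall>k\<in>A. p k \<noteq> 0" using p A by force
  have residual: "lin_pred K (prod_ls_coeff A p) a - (\<Prod>i\<in>A. a i)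
      = P + (\<Sum>k\<in>A. P / p k * (a k - p k)) - (\<Prod>i\<in>A. a i)" for a
    unfolding lin_pred_prod_ls_coeff[OF A pA] P_def ..
  have mean_zero: "attr_expect K p (\<lambda>a. a k - p k) = 0" if "k \<in> A" for k
    using A that by (simp add: attr_expect_diff attr_expect_component attr_expect_const subset_iff)
  have "attr_expect K p (\<lambda>a. P + (\<Sum>k\<in>A. P / p k * (a k - p k)) - (\<Prod>i\<in>A. a i))
      = P + (\<Sum>k\<in>A. P / p k * attr_expect K p (\<lambda>a. a k - p k)) - P"
    by (simp only: attr_expect_diff attr_expect_add attr_expect_sum attr_expect_cmult
        attr_expect_const attr_expect_prod_subset[OF A] P_def)
  also have "\<dots> = 0" using mean_zero by simp
  finally have "attr_expect K p (\<lambda>a. P + (\<Sum>k\<in>A. P / p k * (a k - p k)) - (\<Prod>i\<in>A. a i)) = 0" .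
  moreover have "attr_expect K p (\<lambda>a. a j * (P + (\<Sum>k\<in>A. P / p k * (a k - p k)) - (\<Prod>i\<in>A. a i))) = 0"
    if j: "j \<in> {1..K}" for j
  proof -
    have "attr_expect K p (\<lambda>a. a j * (P + (\<Sum>k\<in>A. P / p k * (a k - p k)) - (\<Prod>i\<in>A. a i)))
        = attr_expect K p (\<lambda>a. P * a j + (\<Sum>k\<in>A. P / p k * (a j * (a k - p k)))
            - a j * (\<Prod>i\<in>A. a i))"
      by (simp add: algebra_simps sum_distrib_left)
    also have "\<dots> = P * p j + (\<Sum>k\<in>A. P / p k * attr_expect K p (\<lambda>a. a j * (a k - p k)))
        - (if j \<in> A then 1 else p j) * P"
      by (simp only: attr_expect_diff attr_expect_add attr_expect_sum attr_expect_cmult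
          attr_expect_component[OF j] attr_expect_mult_prod_subset[OF A j] P_def)
    also have "(\<Sum>k\<in>A. P / p k * attr_expect K p (\<lambda>a. a j * (a k - p k)))
        = (if j \<in> A then P * (1 - p j) else 0)"
      by (rule sum_attr_expect_covariance[OF A pA j])
    finally show ?thesis by (cases "j \<in> A") (simp_all add: algebra_simps)
  qed
  ultimately show ?thesis unfolding attr_orthogonal_def residual by blast
qed

lemma dina_mean_eq:
  fixes K Ks :: nat
  assumes a: "a \<in> attr_space K" and "Ks \<le> K"
  shows "dina_mean Ks s g a = g + (1 - s - g) * (\<Prod>i\<in>{1..Ks}. a i)"
proof (cases "\<forall>i\<in>{1..Ks}. a i = 1")
  case False
  then obtain i where i: "i \<in> {1..Ks}" "a i \<noteq> 1" by blast
  then have "a i = 0" using attr_space_values[OF a, of i] \<open>Ks \<le> K\<close> by auto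
  then have "(\<Prod>i\<in>{1..Ks}. a i) = 0" using i by (intro prod_zero) auto
  then show ?thesis unfolding dina_mean_def by simp
qed (simp add: dina_mean_def)

definition dina_ls_coeff :: "nat \<Rightarrow> (nat \<Rightarrow> real) \<Rightarrow> real \<Rightarrow> real \<Rightarrow> nat \<Rightarrow> real" where
  "dina_ls_coeff Ks p s g k = (if k = 0 then g else 0) + (1 - s - g) * prod_ls_coeff {1..Ks} p k"

lemma dina_ls_coeff_required_nonzero:
  assumes "g < 1 - s" and "\<forall>k\<in>{1..Ks}. p k \<noteq> 0" and "l \<in> {1..Ks}"
  shows "dina_ls_coeff Ks p s g l \<noteq> 0"
  using assms by (simp add: dina_ls_coeff_def prod_ls_coeff_def)

lemma dina_ls_coeff_unrequired_eq_0: "Ks < k \<Longrightarrow> dina_ls_coeff Ks p s g k = 0"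
  by (simp add: dina_ls_coeff_def prod_ls_coeff_def)

lemma lin_pred_dina_ls_coeff:
  "lin_pred K (dina_ls_coeff Ks p s g) a = g + (1 - s - g) * lin_pred K (prod_ls_coeff {1..Ks} p) a"
  unfolding lin_pred_def dina_ls_coeff_def
  by (simp add: algebra_simps sum.distrib sum_distrib_left)

lemma dina_ls_residual_orthogonal:
  fixes K Ks :: nat
  assumes "Ks \<le> K" and p: "\<forall>k\<in>{1..K}. 0 < p k \<and> p k < 1"
  shows "attr_orthogonal K p (\<lambda>a. lin_pred K (dina_ls_coeff Ks p s g) a - dina_mean Ks s g a)"
proof -
  have residual: "lin_pred K (dina_ls_coeff Ks p s g) a - dina_mean Ks s g a
      = (1 - s - g) * (lin_pred K (prod_ls_coeff {1..Ks} p) a - (\<Prod>i\<in>{1..Ks}. a i))"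
    if "a \<in> attr_space K" for a
    unfolding lin_pred_dina_ls_coeff dina_mean_eq[OF that \<open>Ks \<le> K\<close>] by (simp add: algebra_simps)
  have "{1..Ks} \<subseteq> {1..K}" using \<open>Ks \<le> K\<close> by auto
  then have "attr_orthogonal K p
      (\<lambda>a. (1 - s - g) * (lin_pred K (prod_ls_coeff {1..Ks} p) a - (\<Prod>i\<in>{1..Ks}. a i)))"
    by (intro attr_orthogonal_cmult prod_ls_residual_orthogonal p)
  then show ?thesis by (rule attr_orthogonal_cong[THEN iffD2, rotated]) (rule residual)
qed

theorem proposition1:
  fixes K Ks :: nat and p :: "nat \<Rightarrow> real" and s g :: real
  assumes "1 \<le> K" and "1 \<le> Ks" and "Ks \<le> K"
    and "\<forall>k\<in>{1..K}. 0 < p k \<and> p k < 1"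
    and "0 \<le> s" and "s \<le> 1" and "0 \<le> g" and "g \<le> 1"
    and "g < 1 - s"
  shows "(\<exists>\<beta>. is_pop_ls K Ks p s g \<beta>) \<and>
         (\<forall>\<beta>. is_pop_ls K Ks p s g \<beta> \<longrightarrow>
              (\<forall>l\<in>{1..Ks}. \<beta> l \<noteq> 0) \<and> (\<forall>k\<in>{Ks<..K}. \<beta> k = 0))"
proof -
  let ?b = "dina_ls_coeff Ks p s g"
  have orth: "attr_orthogonal K p (\<lambda>a. lin_pred K ?b a - dina_mean Ks s g a)"
    using dina_ls_residual_orthogonal assms(3,4) .
  have p_nonzero: "\<forall>k\<in>{1..Ks}. p k \<noteq> 0" using assms(3,4) by force
  show ?thesis
  proof (intro conjI allI impI)
    show "\<exists>\<beta>. is_pop_ls K Ks p s g \<beta>"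
      using is_pop_ls_if_orthogonal[OF assms(4) orth] by blast
  next
    fix \<beta> assume "is_pop_ls K Ks p s g \<beta>"
    note coeffs = is_pop_ls_unique[OF assms(4) orth this]
    show "\<forall>l\<in>{1..Ks}. \<beta> l \<noteq> 0"
      using coeffs dina_ls_coeff_required_nonzero[OF \<open>g < 1 - s\<close> p_nonzero] assms(3) by force
    show "\<forall>k\<in>{Ks<..K}. \<beta> k = 0"
      using coeffs dina_ls_coeff_unrequired_eq_0 by force
  qed
qed

end
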